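(* Let $q$ be a prime power and let $m,\ell,r_1,\dots,r_m,k,N$ be positive integers with $\ell\le k\le m\ell$ and $N\ge m\ell$, and set $n:=\sum_{i=1}^m(\ell+r_i)$. Let $\widetilde G\in\mathbb{F}_{q^N}^{k\times m\ell}$ be a generator matrix of an $\mathbb{F}_{q^N}$-linear MRD code of length $m\ell$ and dimension $k$. For $i=1,\dots,m$ let $M_i\in\mathbb{F}_q^{\ell\times(\ell+r_i)}$ be a generator matrix of an $[\ell+r_i,\ell]$-MDS code over $\mathbb{F}_q$, and let $M\in\mathbb{F}_q^{m\ell\times n}$ be the block-diagonal matrix with diagonal blocks $M_1,\dots,M_m$ (all other entries zero). Then $\widetilde G M$ is a generator matrix of an $[n,k,\ell;r_1,\dots,r_m]$-PMDS code over $\mathbb{F}_{q^N}$, where the blocks are the consecutive column groups of sizes $\ell+r_1,\dots,\ell+r_m$.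
   Context: An $[n,k]$-MDS code over a field $\mathbb{F}$ is a linear code in $\mathbb{F}^n$ of dimension $k$ and minimum Hamming distance $n-k+1$. PMDS codes: let $\ell,m,r_1,\dots,r_m$ be positive integers, $n=\sum_{i=1}^m(r_i+\ell)$, and $C\subseteq\mathbb{F}^n$ a linear code of dimension $k<n$ with generator matrix $G=(B_1\mid\dots\mid B_m)$, $B_i\in\mathbb{F}^{k\times(r_i+\ell)}$. Then $C$ is an $[n,k,\ell;r_1,\dots,r_m]$-PMDS code if (i) for each $i$ the row space of $B_i$ is an $[r_i+\ell,\ell]$-MDS code, and (ii) for any choice of $r_i$ erased coordinates in the $i$-th block for every $i$, the code obtained from $C$ by puncturing these coordinates is an $[m\ell,k]$-MDS code. Rank metric: fixing an $\mathbb{F}_q$-basis of $\mathbb{F}_{q^N}$, each $u\in\mathbb{F}_{q^N}^{n'}$ is identified with a matrix in $\mathbb{F}_q^{N\times n'}$; the rank distance $d_R(u,v)$ is the rank of the matrix of $u-v$. An $\mathbb{F}_{q^N}$-linear rank-metric code of length $n'$ and dimension $k$ is a $k$-dimensional $\mathbb{F}_{q^N}$-subspace of $\mathbb{F}_{q^N}^{n'}$; it is MRD (maximum rank distance) if its minimum rank distance equals $n'-k+1$. *)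

theory Defs
  imports "Jordan_Normal_Form.DL_Submatrix" "HOL-Computational_Algebra.Primes"
begin

text \<open>The big field F_{q^N} is the (finite) type 'a, the small field F_q is a subfield F.\<close>

definition is_subfield :: "'a::field set \<Rightarrow> bool" where
  "is_subfield K \<longleftrightarrow> 0 \<in> K \<and> 1 \<in> K \<and> (\<forall>x\<in>K. \<forall>y\<in>K. x + y \<in> K \<and> x - y \<in> K \<and> x * y \<in> K)
     \<and> (\<forall>x\<in>K. inverse x \<in> K)"

definition vecs_over :: "'a set \<Rightarrow> nat \<Rightarrow> 'a vec set" where
  "vecs_over K n = {v. v \<in> carrier_vec n \<and> (\<forall>j<n. v $ j \<in> K)}"

definition indep_vecs :: "'a::field set \<Rightarrow> nat \<Rightarrow> 'a vec set \<Rightarrow> bool" where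
  "indep_vecs K n S \<longleftrightarrow> finite S \<and>
     (\<forall>c. (\<forall>v\<in>S. c v \<in> K) \<longrightarrow> (\<forall>j<n. (\<Sum>v\<in>S. c v * v $ j) = 0) \<longrightarrow> (\<forall>v\<in>S. c v = 0))"

definition is_subspace :: "'a::field set \<Rightarrow> nat \<Rightarrow> 'a vec set \<Rightarrow> bool" where
  "is_subspace K n C \<longleftrightarrow> C \<subseteq> vecs_over K n \<and> 0\<^sub>v n \<in> C \<and>
     (\<forall>u\<in>C. \<forall>v\<in>C. u + v \<in> C) \<and> (\<forall>a\<in>K. \<forall>u\<in>C. a \<cdot>\<^sub>v u \<in> C)"

definition dim_over :: "'a::field set \<Rightarrow> nat \<Rightarrow> 'a vec set \<Rightarrow> nat" where
  "dim_over K n C = Max {card S | S. S \<subseteq> C \<and> indep_vecs K n S}"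

definition row_space :: "'a::field set \<Rightarrow> 'a mat \<Rightarrow> 'a vec set" where
  "row_space K G = {vec (dim_col G) (\<lambda>j. \<Sum>i<dim_row G. x i * G $$ (i, j)) | x. \<forall>i<dim_row G. x i \<in> K}"

definition hamming_dist :: "nat \<Rightarrow> 'a::field vec \<Rightarrow> 'a vec \<Rightarrow> nat" where
  "hamming_dist n u v = card {j. j < n \<and> u $ j \<noteq> v $ j}"

definition min_hamming_dist :: "nat \<Rightarrow> 'a::field vec set \<Rightarrow> nat" where
  "min_hamming_dist n C = Min {hamming_dist n u v | u v. u \<in> C \<and> v \<in> C \<and> u \<noteq> v}"

definition is_MDS :: "'a::field set \<Rightarrow> nat \<Rightarrow> nat \<Rightarrow> 'a vec set \<Rightarrow> bool" where
  "is_MDS K n k C \<longleftrightarrow> is_subspace K n C \<and> dim_over K n C = k \<and> min_hamming_dist n C = n - k + 1"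

definition indep_scalars :: "'a::field set \<Rightarrow> 'a set \<Rightarrow> bool" where
  "indep_scalars F S \<longleftrightarrow> finite S \<and>
     (\<forall>c. (\<forall>x\<in>S. c x \<in> F) \<longrightarrow> (\<Sum>x\<in>S. c x * x) = 0 \<longrightarrow> (\<forall>x\<in>S. c x = 0))"

text \<open>Rank weight of u (length n) over the subfield F: the rank of the F-matrix obtained by
  expanding the entries of u in an F-basis, i.e. the F-dimension of the F-span of the
  entries of u (column rank).\<close>
definition rank_weight :: "'a::field set \<Rightarrow> nat \<Rightarrow> 'a vec \<Rightarrow> nat" where
  "rank_weight F n u = Max {card S | S. S \<subseteq> (\<lambda>j. u $ j) ` {..<n} \<and> indep_scalars F S}"

definition rank_dist :: "'a::field set \<Rightarrow> nat \<Rightarrow> 'a vec \<Rightarrow> 'a vec \<Rightarrow> nat" where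
  "rank_dist F n u v = rank_weight F n (u - v)"

definition min_rank_dist :: "'a::field set \<Rightarrow> nat \<Rightarrow> 'a vec set \<Rightarrow> nat" where
  "min_rank_dist F n C = Min {rank_dist F n u v | u v. u \<in> C \<and> v \<in> C \<and> u \<noteq> v}"

definition is_MRD :: "'a::field set \<Rightarrow> nat \<Rightarrow> nat \<Rightarrow> 'a vec set \<Rightarrow> bool" where
  "is_MRD F n k C \<longleftrightarrow> is_subspace UNIV n C \<and> dim_over UNIV n C = k \<and> min_rank_dist F n C = n - k + 1"

text \<open>Column offsets and column index sets of the blocks (0-based block index i < m).\<close>
definition block_off :: "nat \<Rightarrow> (nat \<Rightarrow> nat) \<Rightarrow> nat \<Rightarrow> nat" where
  "block_off l r i = (\<Sum>j<i. l + r j)"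

definition block_cols :: "nat \<Rightarrow> (nat \<Rightarrow> nat) \<Rightarrow> nat \<Rightarrow> nat set" where
  "block_cols l r i = {block_off l r i ..< block_off l r i + (l + r i)}"

definition block_diag :: "nat \<Rightarrow> nat \<Rightarrow> (nat \<Rightarrow> nat) \<Rightarrow> (nat \<Rightarrow> 'a::zero mat) \<Rightarrow> 'a mat" where
  "block_diag m l r Ms = mat (m * l) (\<Sum>i<m. l + r i)
     (\<lambda>(a, b). if a div l < m \<and> b \<in> block_cols l r (a div l)
               then Ms (a div l) $$ (a mod l, b - block_off l r (a div l)) else 0)"

definition is_generator :: "'a::field set \<Rightarrow> nat \<Rightarrow> nat \<Rightarrow> 'a mat \<Rightarrow> bool" where
  "is_generator K k n G \<longleftrightarrow> G \<in> carrier_mat k n \<and> (\<forall>i<k. \<forall>j<n. G $$ (i, j) \<in> K)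
     \<and> dim_over K n (row_space K G) = k"

definition is_PMDS_generator :: "'a::field set \<Rightarrow> nat \<Rightarrow> nat \<Rightarrow> nat \<Rightarrow> (nat \<Rightarrow> nat) \<Rightarrow> 'a mat \<Rightarrow> bool" where
  "is_PMDS_generator K k l m r G \<longleftrightarrow>
     (let n = (\<Sum>i<m. r i + l) in
      is_generator K k n G \<and> k < n \<and>
      (\<forall>i<m. is_MDS K (r i + l) l (row_space K (submatrix G UNIV (block_cols l r i)))) \<and>
      (\<forall>E. (\<forall>i<m. card (E \<inter> block_cols l r i) = r i)
           \<and> E \<subseteq> {..<n} \<longrightarrow>
           is_MDS K (m * l) k (row_space K (submatrix G UNIV ({..<n} - E)))))"

end

theory Submission
  imports Defs "Jordan_Normal_Form.Determinant"
begin

(*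
  Write a codeword as w = u M with u = x Gt, where x is the message.  The entries of w in
  block i are F-linear combinations of the l entries of u belonging to block i.  Conversely,
  any l columns of the MDS matrix M_i form an invertible F-matrix, so these l entries of u
  are F-linear combinations of any l surviving entries of w in block i.  Hence, after
  puncturing r_i coordinates in every block, all entries of u lie in the F-span of the nonzero
  surviving entries of w: their number is at least the rank weight of u, which is at least
  ml - k + 1 by the MRD property.  This is the MDS property of the punctured code.  The same
  invertibility, applied to Gt (which is MDS because rank weight is at most Hamming weight),
  shows that the restriction of u to block i is arbitrary, so the i-th block of the code is
  the row space of M_i, an MDS code over F_{q^N}.
*)

section \<open>Linear algebra over a subfield\<close>

lemma sum_delta_mult:
  assumes "finite A" "j \<in> A"
  shows "(\<Sum>t\<in>A. (if t = j then 1 else 0) * f t) = (f j :: 'a::semiring_1)"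
proof -
  have "(\<Sum>t\<in>A. (if t = j then 1 else 0) * f t) = (\<Sum>t\<in>A. if t = j then f t else 0)"
    by (rule sum.cong) auto
  then show ?thesis using assms by simp
qed

lemma sum_comb_eq_zero:
  assumes "\<forall>t\<in>T. (\<Sum>s\<in>S. x s * c s t) = 0"
  shows "(\<Sum>s\<in>S. x s * (\<Sum>t\<in>T. c s t * w t)) = (0 :: 'a::comm_semiring_0)"
proof -
  have "(\<Sum>s\<in>S. x s * (\<Sum>t\<in>T. c s t * w t)) = (\<Sum>s\<in>S. \<Sum>t\<in>T. x s * c s t * w t)"
    by (simp add: sum_distrib_left mult.assoc)
  also have "\<dots> = (\<Sum>t\<in>T. \<Sum>s\<in>S. x s * c s t * w t)"
    by (rule sum.swap)
  also have "\<dots> = (\<Sum>t\<in>T. (\<Sum>s\<in>S. x s * c s t) * w t)"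
    by (simp add: sum_distrib_right)
  finally show ?thesis using assms by simp
qed

lemma subfield_UNIV: "is_subfield (UNIV :: 'a::field set)"
  unfolding is_subfield_def by auto

context
  fixes K :: "'a::field set"
  assumes K: "is_subfield K"
begin

lemma subfield_zero: "0 \<in> K"
  and subfield_one: "1 \<in> K"
  and subfield_add: "x \<in> K \<Longrightarrow> y \<in> K \<Longrightarrow> x + y \<in> K"
  and subfield_diff: "x \<in> K \<Longrightarrow> y \<in> K \<Longrightarrow> x - y \<in> K"
  and subfield_mult: "x \<in> K \<Longrightarrow> y \<in> K \<Longrightarrow> x * y \<in> K"
  and subfield_inverse: "x \<in> K \<Longrightarrow> inverse x \<in> K"
  using K unfolding is_subfield_def by auto

lemma subfield_uminus: "x \<in> K \<Longrightarrow> - x \<in> K"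
  using subfield_diff[OF subfield_zero] by fastforce

lemma subfield_divide: "x \<in> K \<Longrightarrow> y \<in> K \<Longrightarrow> x / y \<in> K"
  by (simp add: divide_inverse subfield_inverse subfield_mult)

lemma subfield_sum: "(\<And>i. i \<in> A \<Longrightarrow> f i \<in> K) \<Longrightarrow> sum f A \<in> K"
  by (induction A rule: infinite_finite_induct) (auto simp: subfield_zero subfield_add)

lemmas subfield_closed = subfield_zero subfield_one subfield_add subfield_diff subfield_mult
  subfield_uminus subfield_divide subfield_sum

lemma homogeneous_system_nontrivial_solution:
  assumes "finite J" "finite R" "card J < card R" "\<forall>i\<in>R. \<forall>j\<in>J. A i j \<in> K"
  shows "\<exists>x. (\<forall>i\<in>R. x i \<in> K) \<and> (\<exists>i\<in>R. x i \<noteq> 0) \<and> (\<forall>j\<in>J. (\<Sum>i\<in>R. x i * A i j) = 0)"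
  using assms
proof (induction J arbitrary: R A rule: finite_induct)
  case empty
  then obtain i0 where "i0 \<in> R" by (metis card.empty card_gt_0_iff ex_in_conv)
  then show ?case
    by (intro exI[of _ "\<lambda>i. if i = i0 then 1 else 0"]) (auto simp: subfield_zero subfield_one)
next
  case (insert b J)
  show ?case
  proof (cases "\<forall>i\<in>R. A i b = 0")
    case True
    have "card J < card R" "\<forall>i\<in>R. \<forall>j\<in>J. A i j \<in> K"
      using insert by auto
    then obtain x where "\<forall>i\<in>R. x i \<in> K" "\<exists>i\<in>R. x i \<noteq> 0"
      "\<forall>j\<in>J. (\<Sum>i\<in>R. x i * A i j) = 0"
      using insert.IH[OF insert.prems(1)] by blast
    with True show ?thesis by (intro exI[of _ x]) auto
  next
    case False
    then obtain p where p: "p \<in> R" "A p b \<noteq> 0" by auto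
    define A' where "A' i j = A i j - A i b / A p b * A p j" for i j
    have "finite (R - {p})" "card J < card (R - {p})" "\<forall>i\<in>R - {p}. \<forall>j\<in>J. A' i j \<in> K"
      using insert p unfolding A'_def by (auto intro!: subfield_closed)
    from insert.IH[OF this] obtain y where y: "\<forall>i\<in>R - {p}. y i \<in> K"
      "\<exists>i\<in>R - {p}. y i \<noteq> 0" "\<forall>j\<in>J. (\<Sum>i\<in>R - {p}. y i * A' i j) = 0"
      by blast
    \<comment> \<open>Pivot on \<open>A p b\<close>: solve the reduced system \<open>A'\<close>, then choose \<open>x p\<close> to clear column \<open>b\<close>.\<close>
    define x where "x i = (if i = p then - (\<Sum>i'\<in>R - {p}. y i' * A i' b) / A p b else y i)"
      for i
    have reduce: "(\<Sum>i\<in>R. x i * A i j) = (\<Sum>i\<in>R - {p}. y i * A' i j)" for j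
    proof -
      have "(\<Sum>i\<in>R. x i * A i j) = x p * A p j + (\<Sum>i\<in>R - {p}. x i * A i j)"
        by (rule sum.remove[OF insert.prems(1) p(1)])
      also have "(\<Sum>i\<in>R - {p}. x i * A i j) = (\<Sum>i\<in>R - {p}. y i * A i j)"
        by (rule sum.cong) (auto simp: x_def)
      also have "x p * A p j + \<dots> = (\<Sum>i\<in>R - {p}. y i * A' i j)"
        unfolding x_def A'_def
        by (simp add: right_diff_distrib sum_subtractf sum_distrib_right sum_divide_distrib
            mult.assoc)
      finally show ?thesis .
    qed
    have "\<forall>i\<in>R. x i \<in> K"
      using y(1) insert.prems(3) p unfolding x_def by (auto intro!: subfield_closed)
    moreover have "\<exists>i\<in>R. x i \<noteq> 0" using y(2) unfolding x_def by auto
    moreover have "\<forall>j\<in>insert b J. (\<Sum>i\<in>R. x i * A i j) = 0"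
      using y(3) p by (auto simp: reduce A'_def)
    ultimately show ?thesis by blast
  qed
qed

lemma card_le_if_indep_scalars_in_span:
  assumes ind: "indep_scalars K S" and "finite T"
    and span: "\<forall>s\<in>S. \<exists>c. (\<forall>t\<in>T. c t \<in> K) \<and> s = (\<Sum>t\<in>T. c t * w t)"
  shows "card S \<le> card T"
proof (rule ccontr)
  assume "\<not> ?thesis"
  then have lt: "card T < card S" by simp
  obtain c where c: "\<forall>s\<in>S. (\<forall>t\<in>T. c s t \<in> K) \<and> s = (\<Sum>t\<in>T. c s t * w t)"
    using bchoice[OF span] by blast
  have "finite S" using ind unfolding indep_scalars_def by blast
  moreover have "\<forall>s\<in>S. \<forall>t\<in>T. c s t \<in> K" using c by blast
  ultimately obtain x where x: "\<forall>s\<in>S. x s \<in> K" "\<exists>s\<in>S. x s \<noteq> 0"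
    "\<forall>t\<in>T. (\<Sum>s\<in>S. x s * c s t) = 0"
    using homogeneous_system_nontrivial_solution[OF \<open>finite T\<close> _ lt] by blast
  have "(\<Sum>s\<in>S. x s * s) = (\<Sum>s\<in>S. x s * (\<Sum>t\<in>T. c s t * w t))"
    using c by (intro sum.cong) auto
  also have "\<dots> = 0" by (rule sum_comb_eq_zero[OF x(3)])
  finally show False using ind x(1,2) unfolding indep_scalars_def by blast
qed

lemma card_le_if_indep_vecs_in_span:
  assumes ind: "indep_vecs K n S" and "finite T"
    and span: "\<forall>v\<in>S. \<exists>c. (\<forall>t\<in>T. c t \<in> K) \<and> (\<forall>j<n. v $ j = (\<Sum>t\<in>T. c t * W t j))"
  shows "card S \<le> card T"
proof (rule ccontr)
  assume "\<not> ?thesis"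
  then have lt: "card T < card S" by simp
  obtain c where c: "\<forall>v\<in>S. (\<forall>t\<in>T. c v t \<in> K) \<and> (\<forall>j<n. v $ j = (\<Sum>t\<in>T. c v t * W t j))"
    using bchoice[OF span] by blast
  have "finite S" using ind unfolding indep_vecs_def by blast
  moreover have "\<forall>v\<in>S. \<forall>t\<in>T. c v t \<in> K" using c by blast
  ultimately obtain x where x: "\<forall>v\<in>S. x v \<in> K" "\<exists>v\<in>S. x v \<noteq> 0"
    "\<forall>t\<in>T. (\<Sum>v\<in>S. x v * c v t) = 0"
    using homogeneous_system_nontrivial_solution[OF \<open>finite T\<close> _ lt] by blast
  have "(\<Sum>v\<in>S. x v * v $ j) = 0" if "j < n" for j
  proof -
    have "(\<Sum>v\<in>S. x v * v $ j) = (\<Sum>v\<in>S. x v * (\<Sum>t\<in>T. c v t * W t j))"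
      using c that by (intro sum.cong) auto
    also have "\<dots> = 0" by (rule sum_comb_eq_zero[OF x(3)])
    finally show ?thesis .
  qed
  then show False using ind x(1,2) unfolding indep_vecs_def by blast
qed

lemma dim_over_le_card_span:
  assumes "finite T"
    and span: "\<forall>v\<in>C. \<exists>c. (\<forall>t\<in>T. c t \<in> K) \<and> (\<forall>j<n. v $ j = (\<Sum>t\<in>T. c t * W t j))"
  shows "dim_over K n C \<le> card T"
    and "S \<subseteq> C \<Longrightarrow> indep_vecs K n S \<Longrightarrow> card S \<le> dim_over K n C"
proof -
  let ?X = "{card S |S. S \<subseteq> C \<and> indep_vecs K n S}"
  have bound: "\<forall>c\<in>?X. c \<le> card T"
    using card_le_if_indep_vecs_in_span[OF _ \<open>finite T\<close>] span by blast
  then have fin: "finite ?X" using finite_nat_set_iff_bounded_le by blast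
  have "0 \<in> ?X" unfolding indep_vecs_def by force
  then show "dim_over K n C \<le> card T"
    unfolding dim_over_def using fin bound by (intro Max.boundedI) auto
  show "S \<subseteq> C \<Longrightarrow> indep_vecs K n S \<Longrightarrow> card S \<le> dim_over K n C"
    unfolding dim_over_def using fin by (intro Max_ge) auto
qed

lemma rank_weight_le_card_span:
  assumes "finite T" and span: "\<forall>j<n. \<exists>c. (\<forall>t\<in>T. c t \<in> K) \<and> u $ j = (\<Sum>t\<in>T. c t * w t)"
  shows "rank_weight K n u \<le> card T"
proof -
  let ?X = "{card S |S. S \<subseteq> (\<lambda>j. u $ j) ` {..<n} \<and> indep_scalars K S}"
  have bound: "\<forall>c\<in>?X. c \<le> card T"
  proof
    fix c assume "c \<in> ?X"
    then obtain S where "c = card S" "S \<subseteq> (\<lambda>j. u $ j) ` {..<n}" "indep_scalars K S" by blast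
    with span show "c \<le> card T"
      using card_le_if_indep_scalars_in_span[OF _ \<open>finite T\<close>] by blast
  qed
  then have "finite ?X" using finite_nat_set_iff_bounded_le by blast
  moreover have "0 \<in> ?X" unfolding indep_scalars_def by force
  ultimately show ?thesis unfolding rank_weight_def using bound by (intro Max.boundedI) auto
qed

lemma rank_weight_le_card_nonzero: "rank_weight K n u \<le> card {j. j < n \<and> u $ j \<noteq> 0}"
proof (rule rank_weight_le_card_span)
  let ?T = "{j. j < n \<and> u $ j \<noteq> 0}"
  show "\<forall>j<n. \<exists>c. (\<forall>t\<in>?T. c t \<in> K) \<and> u $ j = (\<Sum>t\<in>?T. c t * u $ t)"
  proof (intro allI impI)
    fix j assume j: "j < n"
    show "\<exists>c. (\<forall>t\<in>?T. c t \<in> K) \<and> u $ j = (\<Sum>t\<in>?T. c t * u $ t)"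
    proof (cases "u $ j = 0")
      case True
      then show ?thesis by (intro exI[of _ "\<lambda>_. 0"]) (simp add: subfield_zero)
    next
      case False
      then show ?thesis using j
        by (intro exI[of _ "\<lambda>t. if t = j then 1 else 0"])
          (simp add: subfield_zero subfield_one sum_delta_mult)
    qed
  qed
qed simp

end

section \<open>Row combinations and MDS matrices\<close>

definition row_comb :: "'a::field mat \<Rightarrow> (nat \<Rightarrow> 'a) \<Rightarrow> nat \<Rightarrow> 'a" where
  "row_comb G x j = (\<Sum>i<dim_row G. x i * G $$ (i, j))"

definition entries_in :: "'a set \<Rightarrow> 'a mat \<Rightarrow> bool" where
  "entries_in K G \<longleftrightarrow> (\<forall>i<dim_row G. \<forall>j<dim_col G. G $$ (i, j) \<in> K)"

definition rows_indep :: "'a::field set \<Rightarrow> 'a mat \<Rightarrow> bool" where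
  "rows_indep K G \<longleftrightarrow> (\<forall>x. (\<forall>i<dim_row G. x i \<in> K) \<longrightarrow>
     (\<forall>j<dim_col G. row_comb G x j = 0) \<longrightarrow> (\<forall>i<dim_row G. x i = 0))"

definition mds_matrix :: "'a::field set \<Rightarrow> 'a mat \<Rightarrow> bool" where
  "mds_matrix K G \<longleftrightarrow> (\<forall>x. (\<forall>i<dim_row G. x i \<in> K) \<longrightarrow> (\<exists>i<dim_row G. x i \<noteq> 0) \<longrightarrow>
     card {j. j < dim_col G \<and> row_comb G x j = 0} < dim_row G)"

lemma rows_indepD:
  "rows_indep K G \<Longrightarrow> G \<in> carrier_mat k n \<Longrightarrow> \<forall>i<k. x i \<in> K \<Longrightarrow>
    \<forall>j<n. row_comb G x j = 0 \<Longrightarrow> \<forall>i<k. x i = 0"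
  unfolding rows_indep_def by simp

lemma mds_matrixD:
  "mds_matrix K G \<Longrightarrow> G \<in> carrier_mat k n \<Longrightarrow> \<forall>i<k. x i \<in> K \<Longrightarrow> \<exists>i<k. x i \<noteq> 0 \<Longrightarrow>
    card {j. j < n \<and> row_comb G x j = 0} < k"
  unfolding mds_matrix_def by auto

lemma row_space_row_comb:
  "row_space K G = {vec (dim_col G) (row_comb G x) |x. \<forall>i<dim_row G. x i \<in> K}"
  unfolding row_space_def row_comb_def by simp

lemma row_comb_zero [simp]: "row_comb G (\<lambda>_. 0) j = 0"
  unfolding row_comb_def by simp

lemma row_comb_diff: "row_comb G x j - row_comb G y j = row_comb G (\<lambda>i. x i - y i) j"
  unfolding row_comb_def by (simp add: left_diff_distrib sum_subtractf)

lemma row_comb_add: "row_comb G x j + row_comb G y j = row_comb G (\<lambda>i. x i + y i) j"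
  unfolding row_comb_def by (simp add: distrib_right sum.distrib)

lemma row_comb_scale: "a * row_comb G x j = row_comb G (\<lambda>i. a * x i) j"
  unfolding row_comb_def by (simp add: sum_distrib_left mult.assoc)

lemma row_comb_in_subfield:
  "is_subfield K \<Longrightarrow> entries_in K G \<Longrightarrow> \<forall>i<dim_row G. x i \<in> K \<Longrightarrow> j < dim_col G \<Longrightarrow>
    row_comb G x j \<in> K"
  unfolding row_comb_def entries_in_def by (auto intro!: subfield_sum subfield_mult)

lemma row_comb_mult:
  assumes "A \<in> carrier_mat k s" "B \<in> carrier_mat s n" "j < n"
  shows "row_comb (A * B) x j = row_comb B (row_comb A x) j"
proof -
  have "row_comb (A * B) x j = (\<Sum>i<k. \<Sum>t<s. x i * A $$ (i, t) * B $$ (t, j))"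
    unfolding row_comb_def using assms
    by (auto simp: scalar_prod_def atLeast0LessThan sum_distrib_left mult.assoc intro!: sum.cong)
  also have "\<dots> = (\<Sum>t<s. \<Sum>i<k. x i * A $$ (i, t) * B $$ (t, j))"
    by (rule sum.swap)
  also have "\<dots> = row_comb B (row_comb A x) j"
    unfolding row_comb_def using assms by (simp add: sum_distrib_right)
  finally show ?thesis .
qed

lemma row_comb_delta:
  "a < dim_row G \<Longrightarrow> row_comb G (\<lambda>i. if i = a then 1 else 0) j = G $$ (a, j)"
  unfolding row_comb_def by (simp add: sum_delta_mult)

lemma row_comb_one: "i < k \<Longrightarrow> row_comb (1\<^sub>m k) x i = x i"
  unfolding row_comb_def by (simp add: sum_delta_mult[of "{..<k}" i x, simplified] mult.commute
      if_distrib cong: if_cong)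

lemma pick_bij: "finite S \<Longrightarrow> bij_betw (pick S) {..<card S} S"
proof -
  assume "finite S"
  have inj: "inj_on (pick S) {..<card S}"
  proof
    fix a b assume "a \<in> {..<card S}" "b \<in> {..<card S}" "pick S a = pick S b"
    moreover have False if "a < b" "b < card S" "pick S a = pick S b" for a b
      using pick_mono_le[OF that(2,1)] that(3) by simp
    ultimately show "a = b" by (metis lessThan_iff linorder_neqE_nat)
  qed
  moreover have "pick S ` {..<card S} \<subseteq> S" using pick_in_set_le by auto
  moreover have "card (pick S ` {..<card S}) = card S" using card_image[OF inj] by simp
  ultimately show ?thesis unfolding bij_betw_def using card_subset_eq[OF \<open>finite S\<close>] by blast
qed

lemma pick_atLeastLessThan: "g < b - a \<Longrightarrow> pick {a..<b} g = a + g"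
proof -
  assume g: "g < b - a"
  then have g': "g < card {a..<b}" by simp
  have "pick {a..<b} g \<in> {a..<b}" using pick_in_set_le[OF g'] .
  moreover have "card {x \<in> {a..<b}. x < pick {a..<b} g} = g" using card_pick_le[OF g'] .
  moreover have "{x \<in> {a..<b}. x < pick {a..<b} g} = {a..<pick {a..<b} g}"
    using calculation(1) by auto
  ultimately have "a \<le> pick {a..<b} g" "pick {a..<b} g - a = g" by simp_all
  then show ?thesis by linarith
qed

lemma card_pick_Collect:
  "finite J \<Longrightarrow> card {g. g < card J \<and> P (pick J g)} = card {c \<in> J. P c}"
proof -
  assume "finite J"
  then have bij: "bij_betw (pick J) {..<card J} J" by (rule pick_bij)
  have "pick J ` {g. g < card J \<and> P (pick J g)} = {c \<in> J. P c}"
    using bij unfolding bij_betw_def by auto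
  moreover have "inj_on (pick J) {g. g < card J \<and> P (pick J g)}"
    using bij unfolding bij_betw_def by (auto intro: inj_on_subset)
  ultimately show ?thesis using card_image by fastforce
qed

lemma
  assumes "J \<subseteq> {..<dim_col G}"
  shows dim_row_submatrix_cols: "dim_row (submatrix G UNIV J) = dim_row G"
    and dim_col_submatrix_cols: "dim_col (submatrix G UNIV J) = card J"
    and index_submatrix_cols:
      "i < dim_row G \<Longrightarrow> g < card J \<Longrightarrow> submatrix G UNIV J $$ (i, g) = G $$ (i, pick J g)"
proof -
  have J: "{j. j < dim_col G \<and> j \<in> J} = J" using assms by auto
  show "dim_row (submatrix G UNIV J) = dim_row G" "dim_col (submatrix G UNIV J) = card J"
    by (simp_all add: dim_submatrix J)
  show "i < dim_row G \<Longrightarrow> g < card J \<Longrightarrow> submatrix G UNIV J $$ (i, g) = G $$ (i, pick J g)"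
    by (simp add: submatrix_index J pick_UNIV)
qed

lemma row_comb_submatrix_cols:
  assumes "J \<subseteq> {..<dim_col G}" "g < card J"
  shows "row_comb (submatrix G UNIV J) x g = row_comb G x (pick J g)"
  using assms unfolding row_comb_def dim_row_submatrix_cols[OF assms(1)]
  by (auto simp: index_submatrix_cols intro!: sum.cong)

lemma submatrix_cols_carrier:
  "G \<in> carrier_mat k n \<Longrightarrow> J \<subseteq> {..<n} \<Longrightarrow> submatrix G UNIV J \<in> carrier_mat k (card J)"
  by (intro carrier_matI) (simp_all add: dim_row_submatrix_cols dim_col_submatrix_cols)

lemma entries_in_submatrix_cols:
  assumes "entries_in K G" "J \<subseteq> {..<dim_col G}"
  shows "entries_in K (submatrix G UNIV J)"
  unfolding entries_in_def dim_row_submatrix_cols[OF assms(2)] dim_col_submatrix_cols[OF assms(2)]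
proof (intro allI impI)
  fix i g assume "i < dim_row G" "g < card J"
  then show "submatrix G UNIV J $$ (i, g) \<in> K"
    using assms(1) pick_in_set_le[of g J] index_submatrix_cols[OF assms(2), of i g] assms(2)
    unfolding entries_in_def by auto
qed

lemma card_Collect_less_le: "card {j. j < n \<and> P j} \<le> (n::nat)"
  using card_mono[of "{..<n}" "{j. j < n \<and> P j}"] by auto

lemma hamming_dist_le: "hamming_dist n u v \<le> n"
  unfolding hamming_dist_def by (rule card_Collect_less_le)

lemma hamming_dist_row_comb:
  "hamming_dist n (vec n (row_comb G x)) (vec n (row_comb G y)) =
    n - card {j. j < n \<and> row_comb G (\<lambda>i. x i - y i) j = 0}"
proof -
  have "{j. j < n \<and> vec n (row_comb G x) $ j \<noteq> vec n (row_comb G y) $ j} =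
      {..<n} - {j. j < n \<and> row_comb G (\<lambda>i. x i - y i) j = 0}"
    by (auto simp flip: row_comb_diff)
  moreover have "card ({..<n} - {j. j < n \<and> row_comb G (\<lambda>i. x i - y i) j = 0}) =
      n - card {j. j < n \<and> row_comb G (\<lambda>i. x i - y i) j = 0}"
    by (subst card_Diff_subset) auto
  ultimately show ?thesis unfolding hamming_dist_def by simp
qed

lemma mds_matrix_rows_indep:
  assumes "mds_matrix K G" "dim_row G \<le> dim_col G"
  shows "rows_indep K G"
  unfolding rows_indep_def
proof (intro allI impI)
  fix x i assume x: "\<forall>i<dim_row G. x i \<in> K" "\<forall>j<dim_col G. row_comb G x j = 0"
    and i: "i < dim_row G"
  have "{j. j < dim_col G \<and> row_comb G x j = 0} = {..<dim_col G}" using x(2) by auto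
  then show "x i = 0" using assms x(1) i unfolding mds_matrix_def by force
qed

lemma rows_indep_if_right_inverse:
  assumes B: "B \<in> carrier_mat k s" and D: "D \<in> carrier_mat s k" and BD: "B * D = 1\<^sub>m k"
  shows "rows_indep K B"
  unfolding rows_indep_def
proof (intro allI impI)
  fix x i assume "\<forall>j<dim_col B. row_comb B x j = 0" "i < dim_row B"
  then have "row_comb D (row_comb B x) i = 0" using B D unfolding row_comb_def by simp
  then show "x i = 0"
    using row_comb_mult[OF B D, of i x] \<open>i < dim_row B\<close> B BD by (simp add: row_comb_one)
qed

lemma mds_matrix_submatrix_rows_indep:
  assumes mds: "mds_matrix K G" and G: "G \<in> carrier_mat k n"
    and Z: "Z \<subseteq> {..<n}" "card Z = k"
  shows "rows_indep K (submatrix G UNIV Z)"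
  unfolding rows_indep_def
proof (intro allI impI)
  have Z': "Z \<subseteq> {..<dim_col G}" using Z G by simp
  fix x i assume xK: "\<forall>i<dim_row (submatrix G UNIV Z). x i \<in> K"
    and x0: "\<forall>j<dim_col (submatrix G UNIV Z). row_comb (submatrix G UNIV Z) x j = 0"
    and i: "i < dim_row (submatrix G UNIV Z)"
  have "Z \<subseteq> {j. j < n \<and> row_comb G x j = 0}"
  proof
    fix c assume "c \<in> Z"
    then obtain g where "g < k" "c = pick Z g"
      using pick_bij[of Z] Z finite_subset[OF Z(1)] unfolding bij_betw_def by auto
    then show "c \<in> {j. j < n \<and> row_comb G x j = 0}"
      using x0 Z \<open>c \<in> Z\<close> by (auto simp: dim_col_submatrix_cols[OF Z'] row_comb_submatrix_cols[OF Z'])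
  qed
  then have "\<not> card {j. j < n \<and> row_comb G x j = 0} < k"
    using card_mono[of "{j. j < n \<and> row_comb G x j = 0}" Z] Z by simp
  then show "x i = 0"
    using mds_matrixD[OF mds G, of x] xK i G by (auto simp: dim_row_submatrix_cols[OF Z'])
qed

context
  fixes K :: "'a::field set"
  assumes K: "is_subfield K"
begin

lemma row_space_subspace:
  assumes G: "G \<in> carrier_mat k n" and GK: "entries_in K G"
  shows "is_subspace K n (row_space K G)"
  unfolding is_subspace_def
proof (intro conjI ballI)
  show "row_space K G \<subseteq> vecs_over K n"
    using G row_comb_in_subfield[OF K GK] unfolding row_space_row_comb vecs_over_def by auto
  show "0\<^sub>v n \<in> row_space K G"
    using G unfolding row_space_row_comb
    by (intro CollectI exI[of _ "\<lambda>_. 0"]) (auto simp: subfield_zero[OF K])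
next
  fix u v assume "u \<in> row_space K G" "v \<in> row_space K G"
  then obtain x y where "u = vec n (row_comb G x)" "\<forall>i<k. x i \<in> K"
    "v = vec n (row_comb G y)" "\<forall>i<k. y i \<in> K"
    using G unfolding row_space_row_comb by auto
  then show "u + v \<in> row_space K G"
    using G unfolding row_space_row_comb
    by (auto simp: row_comb_add intro!: exI[of _ "\<lambda>i. x i + y i"] subfield_add[OF K])
next
  fix a u assume "a \<in> K" "u \<in> row_space K G"
  then obtain x where "u = vec n (row_comb G x)" "\<forall>i<k. x i \<in> K"
    using G unfolding row_space_row_comb by auto
  with \<open>a \<in> K\<close> show "a \<cdot>\<^sub>v u \<in> row_space K G"
    using G unfolding row_space_row_comb
    by (auto simp: row_comb_scale intro!: exI[of _ "\<lambda>i. a * x i"] subfield_mult[OF K])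
qed

lemma inj_on_row_if_rows_indep:
  assumes G: "G \<in> carrier_mat k n" and indep: "rows_indep K G"
  shows "inj_on (row G) {..<k}"
proof
  fix a b assume a: "a \<in> {..<k}" and b: "b \<in> {..<k}" and eq: "row G a = row G b"
  let ?x = "\<lambda>i. (if i = a then 1 else 0) - (if i = b then 1 else (0::'a))"
  have "\<forall>i<k. ?x i \<in> K"
    using subfield_zero[OF K] subfield_one[OF K] subfield_diff[OF K] by presburger
  moreover have "\<forall>j<n. row_comb G ?x j = 0"
  proof (intro allI impI)
    fix j assume "j < n"
    then have "G $$ (a, j) = row G a $ j" "G $$ (b, j) = row G b $ j" using G a b by auto
    then have "G $$ (a, j) = G $$ (b, j)" using eq by simp
    then show "row_comb G ?x j = 0" using G a b by (simp flip: row_comb_diff add: row_comb_delta)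
  qed
  ultimately have "\<forall>i<k. ?x i = 0" by (rule rows_indepD[OF indep G])
  then show "a = b" using a by (cases "a = b") auto
qed

lemma indep_vecs_rows:
  assumes G: "G \<in> carrier_mat k n" and indep: "rows_indep K G"
  shows "indep_vecs K n (row G ` {..<k})"
  unfolding indep_vecs_def
proof (intro conjI allI impI ballI)
  fix c v assume cK: "\<forall>v\<in>row G ` {..<k}. c v \<in> K"
    and c0: "\<forall>j<n. (\<Sum>v\<in>row G ` {..<k}. c v * v $ j) = 0" and v: "v \<in> row G ` {..<k}"
  have "row_comb G (\<lambda>i. c (row G i)) j = (\<Sum>v\<in>row G ` {..<k}. c v * v $ j)" if "j < n" for j
    using G that inj_on_row_if_rows_indep[OF G indep] unfolding row_comb_def
    by (simp add: sum.reindex)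
  then have "\<forall>j<n. row_comb G (\<lambda>i. c (row G i)) j = 0" using c0 by simp
  with cK have "\<forall>i<k. c (row G i) \<in> K" "\<forall>j<n. row_comb G (\<lambda>i. c (row G i)) j = 0"
    by simp_all
  then have "\<forall>i<k. c (row G i) = 0" by (rule rows_indepD[OF indep G])
  then show "c v = 0" using v by auto
qed simp

lemma dim_row_space:
  assumes G: "G \<in> carrier_mat k n" and indep: "rows_indep K G"
  shows "dim_over K n (row_space K G) = k"
proof (rule antisym)
  have span: "\<forall>v\<in>row_space K G. \<exists>c. (\<forall>t\<in>{..<k}. c t \<in> K) \<and>
      (\<forall>j<n. v $ j = (\<Sum>t\<in>{..<k}. c t * G $$ (t, j)))"
    using G unfolding row_space_row_comb row_comb_def by auto
  show "dim_over K n (row_space K G) \<le> k"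
    using dim_over_le_card_span(1)[OF K _ span] by simp
  have rows_sub: "row G ` {..<k} \<subseteq> row_space K G"
  proof
    fix v assume "v \<in> row G ` {..<k}"
    then obtain a where a: "a < k" "v = row G a" by auto
    have "v = vec n (row_comb G (\<lambda>i. if i = a then 1 else 0))"
      unfolding a(2) using G a(1) by (intro eq_vecI) (simp_all add: row_comb_delta)
    then show "v \<in> row_space K G"
      using G unfolding row_space_row_comb
      by (intro CollectI exI[of _ "\<lambda>i. if i = a then 1 else 0"])
        (simp add: subfield_zero[OF K] subfield_one[OF K])
  qed
  from dim_over_le_card_span(2)[OF K finite_lessThan span rows_sub indep_vecs_rows[OF G indep]]
  show "k \<le> dim_over K n (row_space K G)"
    using card_image[OF inj_on_row_if_rows_indep[OF G indep]] by simp
qed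

lemma rows_indep_if_dim_row_space:
  assumes G: "G \<in> carrier_mat k n" and dim: "dim_over K n (row_space K G) = k"
  shows "rows_indep K G"
proof (rule ccontr)
  assume "\<not> rows_indep K G"
  then obtain x p where xK: "\<forall>i<k. x i \<in> K" and x0: "\<forall>j<n. row_comb G x j = 0"
    and p: "p < k" "x p \<noteq> 0"
    using G unfolding rows_indep_def by auto
  define T where "T = {..<k} - {p}"
  \<comment> \<open>Row \<open>p\<close> is a combination of the others, so the rows in \<open>T\<close> span the row space.\<close>
  have "\<forall>v\<in>row_space K G. \<exists>c. (\<forall>t\<in>T. c t \<in> K) \<and> (\<forall>j<n. v $ j = (\<Sum>t\<in>T. c t * G $$ (t, j)))"
  proof
    fix v assume "v \<in> row_space K G"
    then obtain y where y: "v = vec n (row_comb G y)" "\<forall>i<k. y i \<in> K"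
      using G unfolding row_space_row_comb by auto
    define z where "z t = y t - y p / x p * x t" for t
    have "v $ j = (\<Sum>t\<in>T. z t * G $$ (t, j))" if j: "j < n" for j
    proof -
      have "v $ j = row_comb G y j - y p / x p * row_comb G x j"
        using x0 j y(1) by simp
      also have "\<dots> = (\<Sum>t<k. z t * G $$ (t, j))"
        unfolding row_comb_scale row_comb_diff unfolding row_comb_def z_def using G by simp
      also have "\<dots> = z p * G $$ (p, j) + (\<Sum>t\<in>T. z t * G $$ (t, j))"
        unfolding T_def using p by (simp add: sum.remove)
      finally show ?thesis using p(2) by (simp add: z_def)
    qed
    moreover have "\<forall>t\<in>T. z t \<in> K"
      using xK y(2) p unfolding T_def z_def by (auto intro!: subfield_closed[OF K])
    ultimately show "\<exists>c. (\<forall>t\<in>T. c t \<in> K) \<and> (\<forall>j<n. v $ j = (\<Sum>t\<in>T. c t * G $$ (t, j)))"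
      by blast
  qed
  then have "dim_over K n (row_space K G) \<le> card T"
    by (rule dim_over_le_card_span(1)[OF K, rotated]) (simp add: T_def)
  then show False using dim p by (simp add: T_def)
qed

lemma hamming_dist_row_space_ge:
  assumes G: "G \<in> carrier_mat k n" and mds: "mds_matrix K G" and "k \<le> n"
    and uv: "u \<in> row_space K G" "v \<in> row_space K G" "u \<noteq> v"
  shows "n - k + 1 \<le> hamming_dist n u v"
proof -
  obtain x where u: "u = vec n (row_comb G x)" and xK: "\<forall>i<k. x i \<in> K"
    using uv(1) G unfolding row_space_row_comb by auto
  obtain y where v: "v = vec n (row_comb G y)" and yK: "\<forall>i<k. y i \<in> K"
    using uv(2) G unfolding row_space_row_comb by auto
  have "\<exists>i<k. x i - y i \<noteq> 0"
  proof (rule ccontr)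
    assume "\<not> ?thesis"
    then have "row_comb G x = row_comb G y"
      using G unfolding row_comb_def by (intro ext) simp
    with uv(3) show False unfolding u v by simp
  qed
  moreover have "\<forall>i<k. x i - y i \<in> K" using xK yK subfield_diff[OF K] by simp
  ultimately have "card {j. j < n \<and> row_comb G (\<lambda>i. x i - y i) j = 0} < k"
    by (intro mds_matrixD[OF mds G])
  then show ?thesis unfolding u v hamming_dist_row_comb using \<open>k \<le> n\<close> by linarith
qed

lemma min_hamming_dist_row_space:
  assumes G: "G \<in> carrier_mat k n" and GK: "entries_in K G" and k: "0 < k" "k \<le> n"
    and mds: "mds_matrix K G"
  shows "min_hamming_dist n (row_space K G) = n - k + 1"
proof -
  let ?D = "{hamming_dist n u v |u v. u \<in> row_space K G \<and> v \<in> row_space K G \<and> u \<noteq> v}"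
  \<comment> \<open>A nonzero codeword vanishing on the first \<open>k - 1\<close> coordinates attains the bound.\<close>
  have card: "card {..<k - 1} < card {..<k}" using k by simp
  have "\<forall>i\<in>{..<k}. \<forall>j\<in>{..<k - 1}. G $$ (i, j) \<in> K"
    using G GK k unfolding entries_in_def by auto
  from homogeneous_system_nontrivial_solution[OF K finite_lessThan finite_lessThan card this]
  obtain x where x: "\<forall>i\<in>{..<k}. x i \<in> K" "\<exists>i\<in>{..<k}. x i \<noteq> 0"
    "\<forall>j\<in>{..<k - 1}. (\<Sum>i\<in>{..<k}. x i * G $$ (i, j)) = 0"
    by blast
  have xK: "\<forall>i<k. x i \<in> K" and nz: "\<exists>i<k. x i \<noteq> 0"
    using x(1,2) lessThan_iff by blast+
  let ?Z = "{j. j < n \<and> row_comb G x j = 0}"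
  have "{..<k - 1} \<subseteq> ?Z" using x(3) G k unfolding row_comb_def by auto
  then have "k - 1 \<le> card ?Z" using card_mono[of ?Z "{..<k - 1}"] by simp
  moreover have "card ?Z < k" by (rule mds_matrixD[OF mds G xK nz])
  ultimately have dist: "hamming_dist n (vec n (row_comb G x)) (vec n (row_comb G (\<lambda>_. 0))) = n - k + 1"
    using k by (simp add: hamming_dist_row_comb)
  then have "vec n (row_comb G x) \<noteq> vec n (row_comb G (\<lambda>_. 0))"
    unfolding hamming_dist_def by auto
  moreover have "vec n (row_comb G x) \<in> row_space K G" "vec n (row_comb G (\<lambda>_. 0)) \<in> row_space K G"
    using xK G subfield_zero[OF K] unfolding row_space_row_comb by auto
  ultimately have "n - k + 1 \<in> ?D" unfolding dist[symmetric] by blast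
  moreover have "finite ?D" by (rule finite_subset[of _ "{..n}"]) (auto intro: hamming_dist_le)
  moreover have "n - k + 1 \<le> d" if "d \<in> ?D" for d
    using that hamming_dist_row_space_ge[OF G mds k(2)] by blast
  ultimately show ?thesis unfolding min_hamming_dist_def by (intro Min_eqI) auto
qed

lemma MDS_row_space_if_mds_matrix:
  assumes G: "G \<in> carrier_mat k n" "entries_in K G" "0 < k" "k \<le> n" and mds: "mds_matrix K G"
  shows "is_MDS K n k (row_space K G)"
  unfolding is_MDS_def
  using row_space_subspace[OF G(1,2)] dim_row_space[OF G(1) mds_matrix_rows_indep[OF mds]]
    min_hamming_dist_row_space[OF assms] G by simp

lemma mds_matrix_if_MDS_row_space:
  assumes G: "G \<in> carrier_mat k n" and MDS: "is_MDS K n k (row_space K G)"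
  shows "mds_matrix K G"
  unfolding mds_matrix_def
proof (intro allI impI)
  fix x assume "\<forall>i<dim_row G. x i \<in> K" "\<exists>i<dim_row G. x i \<noteq> 0"
  then have xK: "\<forall>i<k. x i \<in> K" and nz: "\<exists>i<k. x i \<noteq> 0" using G by auto
  have indep: "rows_indep K G"
    using rows_indep_if_dim_row_space[OF G] MDS unfolding is_MDS_def by blast
  let ?C = "row_space K G" and ?u = "vec n (row_comb G x)" and ?o = "vec n (row_comb G (\<lambda>_. 0))"
  have "?u \<noteq> ?o"
  proof
    assume "?u = ?o"
    then have "\<forall>j<n. row_comb G x j = 0" by (metis index_vec row_comb_zero)
    with rows_indepD[OF indep G xK] nz show False by blast
  qed
  moreover have "?u \<in> ?C" "?o \<in> ?C" using G xK subfield_zero[OF K] unfolding row_space_row_comb by auto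
  moreover have "finite {hamming_dist n u v |u v. u \<in> ?C \<and> v \<in> ?C \<and> u \<noteq> v}"
    by (rule finite_subset[of _ "{..n}"]) (auto intro: hamming_dist_le)
  ultimately have "min_hamming_dist n ?C \<le> hamming_dist n ?u ?o"
    unfolding min_hamming_dist_def by (intro Min_le) blast+
  then have "n - k + 1 \<le> n - card {j. j < n \<and> row_comb G x j = 0}"
    using MDS unfolding is_MDS_def by (simp add: hamming_dist_row_comb)
  moreover have "card {j. j < n \<and> row_comb G x j = 0} \<le> n" by (rule card_Collect_less_le)
  ultimately show "card {j. j < dim_col G \<and> row_comb G x j = 0} < dim_row G"
    using G nz by auto
qed

lemma row_comb_eq_unit_vector:
  assumes B: "B \<in> carrier_mat s s" and BK: "entries_in K B" and indep: "rows_indep K B"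
  shows "\<exists>c. (\<forall>a<s. c a \<in> K) \<and> (\<forall>b<s. row_comb B c b = (if j = b then 1 else 0))"
proof -
  \<comment> \<open>A dependency among the rows of \<open>B\<close> and the unit vector \<open>e\<^sub>j\<close> must involve \<open>e\<^sub>j\<close>.\<close>
  define A where "A a b = (if a < s then B $$ (a, b) else if j = b then 1 else 0)" for a b
  have "\<forall>a\<in>{..<Suc s}. \<forall>b\<in>{..<s}. A a b \<in> K"
    using B BK unfolding A_def entries_in_def by (auto simp: subfield_zero[OF K] subfield_one[OF K])
  from homogeneous_system_nontrivial_solution[OF K finite_lessThan finite_lessThan _ this]
  obtain x where x: "\<forall>a\<in>{..<Suc s}. x a \<in> K" "\<exists>a\<in>{..<Suc s}. x a \<noteq> 0"
    "\<forall>b\<in>{..<s}. (\<Sum>a\<in>{..<Suc s}. x a * A a b) = 0"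
    by auto
  have comb: "row_comb B x b + x s * (if j = b then 1 else 0) = 0" if "b < s" for b
  proof -
    have "(\<Sum>a<s. x a * A a b) = row_comb B x b"
      using B unfolding A_def row_comb_def by (intro sum.cong) auto
    then have "(\<Sum>a<Suc s. x a * A a b) = row_comb B x b + x s * (if j = b then 1 else 0)"
      by (simp add: A_def)
    then show ?thesis using x(3) that by simp
  qed
  have "x s \<noteq> 0"
  proof
    assume "x s = 0"
    then have "\<forall>a<s. x a = 0" using rows_indepD[OF indep B] x(1) comb by simp
    with \<open>x s = 0\<close> x(2) show False by (auto simp: less_Suc_eq)
  qed
  have scaled: "row_comb B (\<lambda>a. - x a / x s) b = - row_comb B x b / x s" for b
    unfolding row_comb_def by (simp add: sum_divide_distrib sum_negf)
  show ?thesis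
  proof (intro exI[of _ "\<lambda>a. - x a / x s"] conjI allI impI)
    fix a assume "a < s"
    then show "- x a / x s \<in> K" using x(1) by (auto intro!: subfield_closed[OF K])
  next
    fix b assume "b < s"
    then have "row_comb B x b = - (x s * (if j = b then 1 else 0))"
      using comb[of b] by (simp add: eq_neg_iff_add_eq_0)
    then show "row_comb B (\<lambda>a. - x a / x s) b = (if j = b then 1 else 0)"
      using \<open>x s \<noteq> 0\<close> unfolding scaled by simp
  qed
qed

lemma square_inverse_in_subfield:
  assumes B: "B \<in> carrier_mat s s" and BK: "entries_in K B" and indep: "rows_indep K B"
  obtains D where "D \<in> carrier_mat s s" "entries_in K D" "D * B = 1\<^sub>m s" "B * D = 1\<^sub>m s"
proof -
  obtain c where c: "\<forall>j. (\<forall>a<s. c j a \<in> K) \<and> (\<forall>b<s. row_comb B (c j) b = (if j = b then 1 else 0))"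
    using row_comb_eq_unit_vector[OF B BK indep] by metis
  define D where "D = mat s s (\<lambda>(j, a). c j a)"
  have D: "D \<in> carrier_mat s s" unfolding D_def by simp
  have DB: "D * B = 1\<^sub>m s"
  proof (rule eq_matI)
    fix i j assume "i < dim_row (1\<^sub>m s)" "j < dim_col (1\<^sub>m s)"
    then show "(D * B) $$ (i, j) = 1\<^sub>m s $$ (i, j)"
      using c B unfolding D_def row_comb_def by (auto simp: scalar_prod_def atLeast0LessThan)
  qed (use D B in auto)
  show ?thesis
  proof (rule that[OF D _ DB mat_mult_left_right_inverse[OF D B DB]])
    show "entries_in K D" using c unfolding D_def entries_in_def by auto
  qed
qed

lemma mds_matrix_recover:
  fixes M :: "'a::field mat" and y :: "nat \<Rightarrow> 'a"
  assumes M: "M \<in> carrier_mat l n" "entries_in K M" "mds_matrix K M"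
    and Z: "Z \<subseteq> {..<n}" "card Z = l" and b: "b < l"
  shows "\<exists>d. (\<forall>z\<in>Z. d z \<in> K) \<and> y b = (\<Sum>z\<in>Z. d z * row_comb M y z)"
proof -
  have Zc: "Z \<subseteq> {..<dim_col M}" using Z M by simp
  have B: "submatrix M UNIV Z \<in> carrier_mat l l" using submatrix_cols_carrier[OF M(1) Z(1)] Z(2) by simp
  from square_inverse_in_subfield[OF B entries_in_submatrix_cols[OF M(2) Zc]
      mds_matrix_submatrix_rows_indep[OF M(3,1) Z]]
  obtain D where D: "D \<in> carrier_mat l l" "entries_in K D" "submatrix M UNIV Z * D = 1\<^sub>m l" .
  have pick: "bij_betw (pick Z) {..<l} Z" using pick_bij[of Z] Z finite_subset[OF Z(1)] by simp
  define d where "d z = D $$ (inv_into {..<l} (pick Z) z, b)" for z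
  have "y b = row_comb D (row_comb (submatrix M UNIV Z) y) b"
    using row_comb_mult[OF B D(1) b, of y] D(3) b by (simp add: row_comb_one)
  also have "\<dots> = (\<Sum>g<l. d (pick Z g) * row_comb M y (pick Z g))"
    using D(1) Zc Z(2) pick unfolding row_comb_def[of D] d_def bij_betw_def
    by (auto simp: row_comb_submatrix_cols mult.commute intro!: sum.cong)
  also have "\<dots> = (\<Sum>z\<in>Z. d z * row_comb M y z)"
    by (rule sum.reindex_bij_betw[OF pick])
  finally have "y b = (\<Sum>z\<in>Z. d z * row_comb M y z)" .
  moreover have "\<forall>z\<in>Z. d z \<in> K"
  proof
    fix z assume "z \<in> Z"
    then have "inv_into {..<l} (pick Z) z < l"
      using pick inv_into_into[of z "pick Z" "{..<l}"] unfolding bij_betw_def by auto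
    then show "d z \<in> K" using D(1,2) b unfolding d_def entries_in_def by auto
  qed
  ultimately show ?thesis by blast
qed

end

lemma mds_matrix_UNIV_if_subfield:
  fixes G :: "'a::field mat"
  assumes F: "is_subfield F" and G: "G \<in> carrier_mat k n" and GF: "entries_in F G"
    and mds: "mds_matrix F G"
  shows "mds_matrix UNIV G"
  unfolding mds_matrix_def
proof (intro allI impI)
  fix y :: "nat \<Rightarrow> 'a" assume "\<exists>i<dim_row G. y i \<noteq> 0"
  then have nz: "\<exists>i<k. y i \<noteq> 0" using G by simp
  let ?Z = "{j. j < n \<and> row_comb G y j = 0}"
  show "card {j. j < dim_col G \<and> row_comb G y j = 0} < dim_row G"
  proof (rule ccontr)
    assume "\<not> ?thesis"
    then have "k \<le> card ?Z" using G by simp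
    then obtain Z where Z: "Z \<subseteq> ?Z" "card Z = k" "finite Z"
      by (rule obtain_subset_with_card_n)
    then have Zn: "Z \<subseteq> {..<n}" by auto
    then have Zc: "Z \<subseteq> {..<dim_col G}" using G by simp
    have sub: "submatrix G UNIV Z \<in> carrier_mat k k"
      using dim_row_submatrix_cols[OF Zc] dim_col_submatrix_cols[OF Zc] G Z(2)
      by (intro carrier_matI) simp_all
    have "entries_in F (submatrix G UNIV Z)"
      by (rule entries_in_submatrix_cols[OF GF Zc])
    \<comment> \<open>The inverse over \<open>F\<close> of these \<open>k\<close> zero columns also kills coefficients outside \<open>F\<close>.\<close>
    from square_inverse_in_subfield[OF F sub this mds_matrix_submatrix_rows_indep[OF mds G Zn Z(2)]]
    obtain D where D: "D \<in> carrier_mat k k" "submatrix G UNIV Z * D = 1\<^sub>m k" .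
    have "\<forall>g<k. row_comb (submatrix G UNIV Z) y g = 0"
    proof (intro allI impI)
      fix g assume "g < k"
      then have "pick Z g \<in> Z" using pick_in_set_le[of g Z] Z(2) by simp
      then show "row_comb (submatrix G UNIV Z) y g = 0"
        using Z row_comb_submatrix_cols[OF Zc, of g y] \<open>g < k\<close> by auto
    qed
    with rows_indepD[OF rows_indep_if_right_inverse[OF sub D, where K = UNIV] sub, of y]
    have "\<forall>i<k. y i = 0" by simp
    then show False using nz by blast
  qed
qed

lemma mds_matrix_interpolate:
  fixes G :: "'a::field mat" and y :: "nat \<Rightarrow> 'a"
  assumes G: "G \<in> carrier_mat k n" "mds_matrix UNIV G" "k \<le> n"
    and I: "I \<subseteq> {..<n}" "card I \<le> k"
  shows "\<exists>x. \<forall>a\<in>I. row_comb G x a = y a"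
proof -
  have "finite I" using I(1) finite_subset by blast
  then have "k - card I \<le> card ({..<n} - I)" using I G(3) by (simp add: card_Diff_subset)
  then obtain R where R: "R \<subseteq> {..<n} - I" "card R = k - card I" "finite R"
    by (rule obtain_subset_with_card_n)
  define J where "J = I \<union> R"
  have "I \<inter> R = {}" using R(1) by blast
  then have J: "J \<subseteq> {..<n}" "card J = k"
    using I R \<open>finite I\<close> unfolding J_def by (auto simp: card_Un_disjoint)
  have Jc: "J \<subseteq> {..<dim_col G}" using J G by simp
  have B: "submatrix G UNIV J \<in> carrier_mat k k" using submatrix_cols_carrier[OF G(1) J(1)] J(2) by simp
  from square_inverse_in_subfield[OF subfield_UNIV B _ mds_matrix_submatrix_rows_indep[OF G(2,1) J]]
  obtain D where D: "D \<in> carrier_mat k k" "D * submatrix G UNIV J = 1\<^sub>m k"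
    by (auto simp: entries_in_def)
  define x where "x = row_comb D (\<lambda>g. y (pick J g))"
  have "row_comb G x a = y a" if "a \<in> I" for a
  proof -
    have "a \<in> pick J ` {..<k}"
      using that pick_bij[of J] J finite_subset[OF J(1)] unfolding J_def bij_betw_def by auto
    then obtain g where g: "g < k" "a = pick J g" by auto
    have "row_comb G x a = row_comb (submatrix G UNIV J) x g"
      using row_comb_submatrix_cols[OF Jc] g J(2) by simp
    also have "\<dots> = row_comb (D * submatrix G UNIV J) (\<lambda>g. y (pick J g)) g"
      unfolding x_def using row_comb_mult[OF D(1) B g(1)] by simp
    also have "\<dots> = y a" using D(2) g by (simp add: row_comb_one)
    finally show ?thesis .
  qed
  then show ?thesis by blast
qed

section \<open>Rank weight and MRD codes\<close>

context
  fixes F :: "'a::field set" and G :: "'a mat" and k n :: nat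
  assumes F: "is_subfield F" and G: "G \<in> carrier_mat k n"
    and MRD: "is_MRD F n k (row_space UNIV G)"
begin

lemma rank_weight_ge_if_MRD:
  assumes nz: "\<exists>i<k. x i \<noteq> 0"
  shows "n - k + 1 \<le> rank_weight F n (vec n (row_comb G x))"
proof -
  let ?C = "row_space UNIV G" and ?u = "vec n (row_comb G x)" and ?o = "vec n (row_comb G (\<lambda>_. 0))"
  have indep: "rows_indep UNIV G"
    using rows_indep_if_dim_row_space[OF subfield_UNIV G] MRD unfolding is_MRD_def by blast
  have "?u \<noteq> ?o"
  proof
    assume "?u = ?o"
    then have "\<forall>j<n. row_comb G x j = 0" by (metis index_vec row_comb_zero)
    with rows_indepD[OF indep G, where x = x] nz show False by auto
  qed
  moreover have "?u \<in> ?C" "?o \<in> ?C" using G unfolding row_space_row_comb by auto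
  moreover have "rank_weight F n v \<le> n" for v
  proof -
    have "rank_weight F n v \<le> card {j. j < n \<and> v $ j \<noteq> 0}"
      by (rule rank_weight_le_card_nonzero[OF F])
    also have "\<dots> \<le> n" by (rule card_Collect_less_le)
    finally show ?thesis .
  qed
  then have "{rank_dist F n u v |u v. u \<in> ?C \<and> v \<in> ?C \<and> u \<noteq> v} \<subseteq> {..n}"
    unfolding rank_dist_def by auto
  then have "finite {rank_dist F n u v |u v. u \<in> ?C \<and> v \<in> ?C \<and> u \<noteq> v}"
    by (rule finite_subset) simp
  ultimately have "min_rank_dist F n ?C \<le> rank_dist F n ?u ?o"
    unfolding min_rank_dist_def by (intro Min_le) blast+
  moreover have "?u - ?o = ?u" by (intro eq_vecI) simp_all
  ultimately show ?thesis using MRD unfolding is_MRD_def rank_dist_def by simp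
qed

lemma mds_matrix_if_MRD: "mds_matrix UNIV G"
  unfolding mds_matrix_def
proof (intro allI impI)
  fix x :: "nat \<Rightarrow> 'a" assume "\<exists>i<dim_row G. x i \<noteq> 0"
  then have nz: "\<exists>i<k. x i \<noteq> 0" using G by simp
  let ?Z = "{j. j < n \<and> row_comb G x j = 0}"
  have "{j. j < n \<and> vec n (row_comb G x) $ j \<noteq> 0} = {..<n} - ?Z" by auto
  moreover have "card ({..<n} - ?Z) = n - card ?Z" by (subst card_Diff_subset) auto
  ultimately have "rank_weight F n (vec n (row_comb G x)) \<le> n - card ?Z"
    using rank_weight_le_card_nonzero[OF F, of n "vec n (row_comb G x)"] by simp
  moreover have "card ?Z \<le> n" by (rule card_Collect_less_le)
  ultimately show "card {j. j < dim_col G \<and> row_comb G x j = 0} < dim_row G"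
    using rank_weight_ge_if_MRD[OF nz] nz G by fastforce
qed

end

section \<open>Block structure\<close>

lemma block_off_Suc: "block_off l r (Suc i) = block_off l r i + (l + r i)"
  unfolding block_off_def by simp

lemma block_off_mono: "i \<le> j \<Longrightarrow> block_off l r i \<le> block_off l r j"
  unfolding block_off_def by (intro sum_mono2) auto

lemma card_block_cols: "card (block_cols l r i) = l + r i"
  unfolding block_cols_def by simp

lemma lessThan_block_off_eq_UN: "{..<block_off l r m} = (\<Union>i<m. block_cols l r i)"
proof (induction m)
  case 0
  then show ?case by (simp add: block_off_def)
next
  case (Suc m)
  have "{..<block_off l r (Suc m)} = {..<block_off l r m} \<union> block_cols l r m"
    unfolding block_off_Suc block_cols_def by auto
  then show ?case using Suc by (simp add: lessThan_Suc Un_commute)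
qed

lemma block_cols_subset: "i < m \<Longrightarrow> block_cols l r i \<subseteq> {..<block_off l r m}"
  using lessThan_block_off_eq_UN by blast

lemma block_cols_disjoint: "i \<noteq> j \<Longrightarrow> block_cols l r i \<inter> block_cols l r j = {}"
proof -
  have *: "block_cols l r i \<inter> block_cols l r j = {}" if "i < j" for i j
  proof -
    have "block_off l r (Suc i) \<le> block_off l r j" using that by (intro block_off_mono) simp
    then show ?thesis unfolding block_cols_def block_off_Suc by auto
  qed
  assume "i \<noteq> j"
  then consider "i < j" | "j < i" by linarith
  then show ?thesis using *[of i j] *[of j i] by cases auto
qed

lemma card_eq_if_card_Int_block_cols:
  assumes "S \<subseteq> {..<block_off l r m}" "\<forall>i<m. card (S \<inter> block_cols l r i) = s"
  shows "card S = m * s"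
proof -
  have "S = (\<Union>i<m. S \<inter> block_cols l r i)"
    using assms(1) unfolding lessThan_block_off_eq_UN by blast
  also have "card \<dots> = (\<Sum>i<m. card (S \<inter> block_cols l r i))"
  proof (rule card_UN_disjoint)
    show "\<forall>i\<in>{..<m}. finite (S \<inter> block_cols l r i)" by (simp add: block_cols_def)
    show "\<forall>i\<in>{..<m}. \<forall>j\<in>{..<m}. i \<noteq> j \<longrightarrow>
        S \<inter> block_cols l r i \<inter> (S \<inter> block_cols l r j) = {}"
      using block_cols_disjoint by fast
  qed simp
  finally show ?thesis using assms(2) by simp
qed

lemma exists_l_per_block:
  "\<exists>S \<subseteq> {..<block_off l r m}. \<forall>i<m. card (S \<inter> block_cols l r i) = l"
proof -
  define S where "S = (\<Union>j<m. {block_off l r j..<block_off l r j + l})"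
  have sub: "{block_off l r j..<block_off l r j + l} \<subseteq> block_cols l r j" for j
    unfolding block_cols_def by auto
  have "S \<inter> block_cols l r i = {block_off l r i..<block_off l r i + l}" if "i < m" for i
  proof
    show "S \<inter> block_cols l r i \<subseteq> {block_off l r i..<block_off l r i + l}"
    proof
      fix c assume c: "c \<in> S \<inter> block_cols l r i"
      then obtain j where "j < m" "c \<in> {block_off l r j..<block_off l r j + l}"
        unfolding S_def by auto
      moreover from this have "j = i" using c sub block_cols_disjoint[of j i l r] by blast
      ultimately show "c \<in> {block_off l r i..<block_off l r i + l}" by simp
    qed
    show "{block_off l r i..<block_off l r i + l} \<subseteq> S \<inter> block_cols l r i"
      using sub that unfolding S_def by blast
  qed
  moreover have "S \<subseteq> {..<block_off l r m}" using sub block_cols_subset unfolding S_def by blast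
  ultimately show ?thesis by auto
qed

lemma block_diag_carrier: "block_diag m l r Ms \<in> carrier_mat (m * l) (block_off l r m)"
  unfolding block_diag_def block_off_def by simp

lemma dim_block_diag:
  "dim_row (block_diag m l r Ms) = m * l" "dim_col (block_diag m l r Ms) = block_off l r m"
  using block_diag_carrier[of m l r Ms] by auto

lemma sum_lessThan_mult_blocks:
  "(\<Sum>a<m * l. f a) = (\<Sum>i<m. \<Sum>b<l. f (i * l + b :: nat) :: 'a::comm_monoid_add)"
proof -
  have "(\<Sum>a<m * l. f a) = (\<Sum>i<m. sum f {i * l..<i * l + l})"
    using sum.nat_group[of f l m] by simp
  also have "\<dots> = (\<Sum>i<m. \<Sum>b<l. f (i * l + b))"
  proof (rule sum.cong)
    fix i show "sum f {i * l..<i * l + l} = (\<Sum>b<l. f (i * l + b))"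
      by (subst sum.atLeastLessThan_shift_0) (simp add: atLeast0LessThan comp_def)
  qed simp
  finally show ?thesis .
qed

lemma row_comb_block_diag:
  fixes u :: "nat \<Rightarrow> 'a::field"
  assumes l: "0 < l" and i: "i < m" and c: "c \<in> block_cols l r i"
  shows "row_comb (block_diag m l r Ms) u c =
    (\<Sum>b<l. u (i * l + b) * Ms i $$ (b, c - block_off l r i))"
proof -
  have c_lt: "c < block_off l r m" using block_cols_subset[OF i] c by blast
  have entry: "block_diag m l r Ms $$ (i' * l + b, c) =
      (if i' = i then Ms i $$ (b, c - block_off l r i) else 0)" if "i' < m" "b < l" for i' b
  proof -
    have "i' * l + b < Suc i' * l" using that by simp
    also have "\<dots> \<le> m * l" using that by (intro mult_le_mono1) simp
    finally have "i' * l + b < m * l" .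
    moreover have "(i' * l + b) div l = i'" "(i' * l + b) mod l = b" using that l by simp_all
    moreover have "c \<in> block_cols l r i' \<longleftrightarrow> i' = i" using c block_cols_disjoint[of i' i l r] by auto
    ultimately show ?thesis using that c_lt unfolding block_diag_def block_off_def by auto
  qed
  have "row_comb (block_diag m l r Ms) u c =
      (\<Sum>i'<m. \<Sum>b<l. u (i' * l + b) * block_diag m l r Ms $$ (i' * l + b, c))"
    unfolding row_comb_def by (simp add: block_diag_def sum_lessThan_mult_blocks)
  also have "\<dots> = (\<Sum>i'<m. if i' = i then (\<Sum>b<l. u (i * l + b) * Ms i $$ (b, c - block_off l r i)) else 0)"
    by (intro sum.cong refl) (auto simp: entry)
  also have "\<dots> = (\<Sum>b<l. u (i * l + b) * Ms i $$ (b, c - block_off l r i))" using i by simp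
  finally show ?thesis .
qed

section \<open>The construction\<close>

locale pmds_construction =
  fixes F :: "'a::field set" and m l k :: nat and r :: "nat \<Rightarrow> nat"
    and Gt :: "'a mat" and Ms :: "nat \<Rightarrow> 'a mat"
  assumes F: "is_subfield F" and l_pos: "0 < l" and k_pos: "0 < k"
    and l_le_k: "l \<le> k" and k_le: "k \<le> m * l"
    and Gt_carrier: "Gt \<in> carrier_mat k (m * l)"
    and Gt_MRD: "is_MRD F (m * l) k (row_space UNIV Gt)"
    and Ms_carrier: "\<forall>i<m. Ms i \<in> carrier_mat l (l + r i)"
    and Ms_entries: "\<forall>i<m. \<forall>a<l. \<forall>b<l + r i. Ms i $$ (a, b) \<in> F"
    and Ms_MDS: "\<forall>i<m. is_MDS F (l + r i) l (row_space F (Ms i))"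
begin

abbreviation "n \<equiv> block_off l r m"

abbreviation "P \<equiv> Gt * block_diag m l r Ms"

lemma P_carrier: "P \<in> carrier_mat k n"
  using Gt_carrier block_diag_carrier[of m l r Ms] by auto

lemma Gt_mds: "mds_matrix UNIV Gt"
  by (rule mds_matrix_if_MRD[OF F Gt_carrier Gt_MRD])

lemma Ms_entries_in: "i < m \<Longrightarrow> entries_in F (Ms i)"
  using Ms_carrier Ms_entries unfolding entries_in_def by auto

lemma Ms_mds_F: "i < m \<Longrightarrow> mds_matrix F (Ms i)"
  using mds_matrix_if_MDS_row_space[OF F] Ms_carrier Ms_MDS by blast

lemma row_comb_P:
  assumes i: "i < m" and c: "c \<in> block_cols l r i"
  shows "row_comb P x c = row_comb (Ms i) (\<lambda>b. row_comb Gt x (i * l + b)) (c - block_off l r i)"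
proof -
  have "c < n" using block_cols_subset[OF i] c by blast
  then have "row_comb P x c = row_comb (block_diag m l r Ms) (row_comb Gt x) c"
    using row_comb_mult[OF Gt_carrier block_diag_carrier] by blast
  also have "\<dots> = (\<Sum>b<l. row_comb Gt x (i * l + b) * Ms i $$ (b, c - block_off l r i))"
    by (rule row_comb_block_diag[OF l_pos i c])
  also have "\<dots> = row_comb (Ms i) (\<lambda>b. row_comb Gt x (i * l + b)) (c - block_off l r i)"
    using Ms_carrier i unfolding row_comb_def[of "Ms i"] by auto
  finally show ?thesis .
qed

lemma message_entry_in_span:
  assumes S: "S \<subseteq> {..<n}" "\<forall>i<m. card (S \<inter> block_cols l r i) = l" and a: "a < m * l"
  shows "\<exists>d. (\<forall>c\<in>S. d c \<in> F) \<and> row_comb Gt x a = (\<Sum>c\<in>S. d c * row_comb P x c)"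
proof -
  define i where "i = a div l"
  define off where "off = block_off l r i"
  define y where "y b = row_comb Gt x (i * l + b)" for b
  have i: "i < m" unfolding i_def using a l_pos by (simp add: less_mult_imp_div_less)
  have a_eq: "a = i * l + a mod l" unfolding i_def by simp
  let ?S = "S \<inter> block_cols l r i"
  have off_le: "off \<le> c" "c - off < l + r i" if "c \<in> ?S" for c
    using that unfolding off_def block_cols_def by auto
  have inj: "inj_on (\<lambda>c. c - off) ?S"
    using off_le(1) by (intro inj_onI) (metis le_add_diff_inverse)
  have Z: "(\<lambda>c. c - off) ` ?S \<subseteq> {..<l + r i}" "card ((\<lambda>c. c - off) ` ?S) = l"
    using off_le card_image[OF inj] S(2) i by auto
  from mds_matrix_recover[OF F _ Ms_entries_in[OF i] Ms_mds_F[OF i] Z, of "a mod l" y]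
  obtain d where d: "\<forall>z\<in>(\<lambda>c. c - off) ` ?S. d z \<in> F"
    "y (a mod l) = (\<Sum>z\<in>(\<lambda>c. c - off) ` ?S. d z * row_comb (Ms i) y z)"
    using Ms_carrier i l_pos by auto
  define d' where "d' c = (if c \<in> block_cols l r i then d (c - off) else 0)" for c
  have "row_comb Gt x a = (\<Sum>c\<in>?S. d (c - off) * row_comb (Ms i) y (c - off))"
    using d(2) unfolding y_def a_eq[symmetric] by (simp add: sum.reindex[OF inj])
  also have "\<dots> = (\<Sum>c\<in>?S. d (c - off) * row_comb P x c)"
    using row_comb_P[OF i] unfolding y_def off_def by (intro sum.cong) auto
  also have "\<dots> = (\<Sum>c\<in>S. if c \<in> block_cols l r i then d (c - off) * row_comb P x c else 0)"
    using finite_subset[OF S(1)] by (simp add: sum.inter_restrict)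
  also have "\<dots> = (\<Sum>c\<in>S. d' c * row_comb P x c)"
    unfolding d'_def by (rule sum.cong) auto
  finally have "row_comb Gt x a = (\<Sum>c\<in>S. d' c * row_comb P x c)" .
  moreover have "\<forall>c\<in>S. d' c \<in> F" using d(1) subfield_zero[OF F] unfolding d'_def by auto
  ultimately show ?thesis by blast
qed

lemma card_zeros_lt:
  assumes S: "S \<subseteq> {..<n}" "\<forall>i<m. card (S \<inter> block_cols l r i) = l"
    and nz: "\<exists>i<k. x i \<noteq> 0"
  shows "card {c \<in> S. row_comb P x c = 0} < k"
proof -
  let ?Z = "{c \<in> S. row_comb P x c = 0}"
  have fin: "finite S" using finite_subset[OF S(1)] by simp
  have cardS: "card S = m * l" by (rule card_eq_if_card_Int_block_cols[OF S])
  have "\<forall>a<m * l. \<exists>d. (\<forall>c\<in>S - ?Z. d c \<in> F) \<and>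
      vec (m * l) (row_comb Gt x) $ a = (\<Sum>c\<in>S - ?Z. d c * row_comb P x c)"
  proof (intro allI impI)
    fix a assume a: "a < m * l"
    then obtain d where d: "\<forall>c\<in>S. d c \<in> F" "row_comb Gt x a = (\<Sum>c\<in>S. d c * row_comb P x c)"
      using message_entry_in_span[OF S] by blast
    have "(\<Sum>c\<in>S. d c * row_comb P x c) = (\<Sum>c\<in>S - ?Z. d c * row_comb P x c)"
      using fin by (intro sum.mono_neutral_cong_right) auto
    then show "\<exists>d. (\<forall>c\<in>S - ?Z. d c \<in> F) \<and>
        vec (m * l) (row_comb Gt x) $ a = (\<Sum>c\<in>S - ?Z. d c * row_comb P x c)"
      using d a by auto
  qed
  then have "rank_weight F (m * l) (vec (m * l) (row_comb Gt x)) \<le> card (S - ?Z)"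
    by (intro rank_weight_le_card_span[OF F]) (use fin in auto)
  moreover have "card (S - ?Z) = m * l - card ?Z" using fin cardS by (simp add: card_Diff_subset)
  moreover have "card ?Z \<le> m * l" using fin cardS card_mono[of S ?Z] by auto
  ultimately show ?thesis using rank_weight_ge_if_MRD[OF F Gt_carrier Gt_MRD nz] k_le by linarith
qed

lemma P_rows_indep: "rows_indep UNIV P"
  unfolding rows_indep_def
proof (intro allI impI)
  fix x :: "nat \<Rightarrow> 'a" and i
  assume zero: "\<forall>j<dim_col P. row_comb P x j = 0" and i: "i < dim_row P"
  obtain S where S: "S \<subseteq> {..<n}" "\<forall>i<m. card (S \<inter> block_cols l r i) = l"
    using exists_l_per_block by blast
  have "{c \<in> S. row_comb P x c = 0} = S" using zero S(1) by (auto simp: dim_block_diag)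
  then have "\<not> (\<exists>i<k. x i \<noteq> 0)"
    using card_zeros_lt[OF S, of x] card_eq_if_card_Int_block_cols[OF S] k_le by auto
  then show "x i = 0" using i P_carrier by auto
qed

lemma punctured_MDS:
  assumes E: "E \<subseteq> {..<n}" "\<forall>i<m. card (E \<inter> block_cols l r i) = r i"
  shows "is_MDS UNIV (m * l) k (row_space UNIV (submatrix P UNIV ({..<n} - E)))"
proof -
  let ?S = "{..<n} - E" and ?Q = "submatrix P UNIV ({..<n} - E)"
  have "\<forall>i<m. card (?S \<inter> block_cols l r i) = l"
  proof (intro allI impI)
    fix i assume i: "i < m"
    have "?S \<inter> block_cols l r i = block_cols l r i - E" using block_cols_subset[OF i] by blast
    also have "card \<dots> = card (block_cols l r i) - card (block_cols l r i \<inter> E)"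
      by (rule card_Diff_subset_Int) (simp add: block_cols_def)
    finally show "card (?S \<inter> block_cols l r i) = l" using E(2) i by (simp add: card_block_cols Int_commute)
  qed
  then have S: "?S \<subseteq> {..<n}" "\<forall>i<m. card (?S \<inter> block_cols l r i) = l" by auto
  have Sc: "?S \<subseteq> {..<dim_col P}" using P_carrier by auto
  have cardS: "card ?S = m * l" by (rule card_eq_if_card_Int_block_cols[OF S])
  have Q: "?Q \<in> carrier_mat k (m * l)" using submatrix_cols_carrier[OF P_carrier S(1)] cardS by simp
  have "mds_matrix UNIV ?Q"
    unfolding mds_matrix_def
  proof (intro allI impI)
    fix x :: "nat \<Rightarrow> 'a" assume "\<exists>i<dim_row ?Q. x i \<noteq> 0"
    then have nz: "\<exists>i<k. x i \<noteq> 0" using Q by simp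
    have "{g. g < dim_col ?Q \<and> row_comb ?Q x g = 0} = {g. g < card ?S \<and> row_comb P x (pick ?S g) = 0}"
      using Q cardS row_comb_submatrix_cols[OF Sc] by auto
    then have "card {g. g < dim_col ?Q \<and> row_comb ?Q x g = 0} = card {c \<in> ?S. row_comb P x c = 0}"
      using card_pick_Collect[of ?S] by simp
    then show "card {g. g < dim_col ?Q \<and> row_comb ?Q x g = 0} < dim_row ?Q"
      using card_zeros_lt[OF S nz] Q by simp
  qed
  moreover have "entries_in UNIV ?Q" by (simp add: entries_in_def)
  ultimately show ?thesis by (intro MDS_row_space_if_mds_matrix[OF subfield_UNIV Q _ k_pos k_le])
qed

lemma row_comb_block_submatrix:
  assumes i: "i < m" and g: "g < l + r i"
  shows "row_comb (submatrix P UNIV (block_cols l r i)) x g =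
    row_comb (Ms i) (\<lambda>b. row_comb Gt x (i * l + b)) g"
proof -
  let ?B = "block_cols l r i"
  have B: "?B \<subseteq> {..<dim_col P}" using block_cols_subset[OF i] by (simp add: dim_block_diag)
  have "pick ?B g = block_off l r i + g"
    unfolding block_cols_def using pick_atLeastLessThan g by simp
  moreover have "block_off l r i + g \<in> ?B" unfolding block_cols_def using g by simp
  ultimately show ?thesis
    using row_comb_submatrix_cols[OF B, of g x] row_comb_P[OF i] g by (simp add: card_block_cols)
qed

lemma block_row_space:
  assumes i: "i < m"
  shows "row_space UNIV (submatrix P UNIV (block_cols l r i)) = row_space UNIV (Ms i)"
proof -
  let ?Q = "submatrix P UNIV (block_cols l r i)"
  have Q: "?Q \<in> carrier_mat k (l + r i)"
    using submatrix_cols_carrier[OF P_carrier block_cols_subset[OF i]] by (simp add: card_block_cols)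
  have Ms: "Ms i \<in> carrier_mat l (l + r i)" using Ms_carrier i by blast
  note comb = row_comb_block_submatrix[OF i]
  show ?thesis
  proof
    show "row_space UNIV ?Q \<subseteq> row_space UNIV (Ms i)"
    proof
      fix v assume "v \<in> row_space UNIV ?Q"
      then obtain x where "v = vec (l + r i) (row_comb ?Q x)" using Q unfolding row_space_row_comb by auto
      then have "v = vec (l + r i) (row_comb (Ms i) (\<lambda>b. row_comb Gt x (i * l + b)))"
        by (auto simp: comb)
      then show "v \<in> row_space UNIV (Ms i)" using Ms unfolding row_space_row_comb by auto
    qed
    show "row_space UNIV (Ms i) \<subseteq> row_space UNIV ?Q"
    proof
      fix v assume "v \<in> row_space UNIV (Ms i)"
      then obtain y where v: "v = vec (l + r i) (row_comb (Ms i) y)"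
        using Ms unfolding row_space_row_comb by auto
      have "i * l + l \<le> m * l" using mult_le_mono1[of "Suc i" m l] i by simp
      then have "{i * l..<i * l + l} \<subseteq> {..<m * l}" by auto
      from mds_matrix_interpolate[OF Gt_carrier Gt_mds k_le this, of "\<lambda>a. y (a - i * l)"]
      obtain x where x: "\<forall>a\<in>{i * l..<i * l + l}. row_comb Gt x a = y (a - i * l)"
        using l_le_k by auto
      have "row_comb (Ms i) (\<lambda>b. row_comb Gt x (i * l + b)) g = row_comb (Ms i) y g" for g
        using Ms x unfolding row_comb_def by (intro sum.cong) auto
      then have "v = vec (l + r i) (row_comb ?Q x)" unfolding v by (auto simp: comb)
      then show "v \<in> row_space UNIV ?Q" using Q unfolding row_space_row_comb by auto
    qed
  qed
qed

lemma block_MDS: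
  assumes i: "i < m"
  shows "is_MDS UNIV (r i + l) l (row_space UNIV (submatrix P UNIV (block_cols l r i)))"
proof -
  have Ms: "Ms i \<in> carrier_mat l (l + r i)" using Ms_carrier i by blast
  have "mds_matrix UNIV (Ms i)"
    by (rule mds_matrix_UNIV_if_subfield[OF F Ms Ms_entries_in[OF i] Ms_mds_F[OF i]])
  then have "is_MDS UNIV (l + r i) l (row_space UNIV (Ms i))"
    by (intro MDS_row_space_if_mds_matrix[OF subfield_UNIV Ms _ l_pos]) (simp_all add: entries_in_def)
  then show ?thesis by (simp add: block_row_space[OF i] add.commute)
qed

end

theorem theorem13:
  fixes F :: "'a::{field,finite} set"
    and q N m l k :: nat and r :: "nat \<Rightarrow> nat"
    and Gt :: "'a mat" and Ms :: "nat \<Rightarrow> 'a mat"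
  assumes q_pp: "\<exists>p e. prime p \<and> e > 0 \<and> q = p ^ e"
    and F_sub: "is_subfield F" and F_card: "card F = q"
    and big_card: "card (UNIV :: 'a set) = q ^ N"
    and pos: "m > 0" "l > 0" "k > 0" "N > 0" "\<forall>i<m. r i > 0"
    and lk: "l \<le> k" "k \<le> m * l" and Nml: "N \<ge> m * l"
    and Gt_gen: "Gt \<in> carrier_mat k (m * l)"
    and Gt_MRD: "is_MRD F (m * l) k (row_space UNIV Gt)"
    and Ms_car: "\<forall>i<m. Ms i \<in> carrier_mat l (l + r i)"
    and Ms_F: "\<forall>i<m. \<forall>a<l. \<forall>b<l + r i. Ms i $$ (a, b) \<in> F"
    and Ms_MDS: "\<forall>i<m. is_MDS F (l + r i) l (row_space F (Ms i))"
  shows "is_PMDS_generator UNIV k l m r (Gt * block_diag m l r Ms)"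
proof -
  \<comment> \<open>The conditions on \<open>q\<close> and \<open>N\<close> only guarantee that the assumed MRD and MDS codes exist.\<close>
  interpret pmds_construction F m l k r Gt Ms
    using F_sub pos lk Gt_gen Gt_MRD Ms_car Ms_F Ms_MDS by unfold_locales auto
  have n: "(\<Sum>i<m. r i + l) = block_off l r m"
    unfolding block_off_def by (simp add: add.commute)
  have "0 < r 0" "r 0 \<le> (\<Sum>i<m. r i)" using pos(1,5) by (auto intro: member_le_sum)
  then have "k < block_off l r m" using lk unfolding block_off_def by (simp add: sum.distrib)
  moreover have "is_generator UNIV k (block_off l r m) P"
    unfolding is_generator_def
    using P_carrier dim_row_space[OF subfield_UNIV P_carrier P_rows_indep] by simp
  ultimately show ?thesis
    unfolding is_PMDS_generator_def Let_def n using block_MDS punctured_MDS by blast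
qed

end
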